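(* For every prime power $q$, $\mathbb{E}_q(3)=2^{\lfloor\log_2(q^2+q+2)\rfloor}$.
   Context: $\mathbb{P}_q(n)$ denotes the set of all subspaces of $\mathbb{F}_q^n$. For subspaces $X,Y$ the subspace distance is $d_S(X,Y)=\dim X+\dim Y-2\dim(X\cap Y)$. A linear code in $\mathbb{P}_q(n)$ is a subset $\mathcal{U}\subseteq\mathbb{P}_q(n)$ with $\{0\}\in\mathcal{U}$ for which there exists a map $\boxplus:\mathcal{U}\times\mathcal{U}\to\mathcal{U}$ such that (i) $(\mathcal{U},\boxplus)$ is an abelian group; (ii) its identity element is $\{0\}$; (iii) $X\boxplus X=\{0\}$ for all $X\in\mathcal{U}$; (iv) $d_S(Y_1\boxplus X,Y_2\boxplus X)=d_S(Y_1,Y_2)$ for all $Y_1,Y_2,X\in\mathcal{U}$. It is equidistant if there is $r$ with $d_S(X,Y)=r$ for all distinct $X,Y\in\mathcal{U}$. $\mathbb{E}_q(n)$ denotes the maximum size of an equidistant linear code in $\mathbb{P}_q(n)$. *)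

theory Defs
  imports "HOL-Analysis.Cartesian_Space"
begin

text \<open>The projective space P_q(n): all subspaces of F^n, where F is a finite field
  (represented as a type 'a of class field and finite, so q = CARD('a)) and F^n is 'a^'n.\<close>

definition proj_space :: "('a::{field,finite} ^ 'n) set set" where
  "proj_space = {X. vec.subspace X}"

definition subspace_dist :: "('a::{field,finite} ^ 'n) set \<Rightarrow> ('a ^ 'n) set \<Rightarrow> nat" where
  "subspace_dist X Y = nat (int (vec.dim X) + int (vec.dim Y) - 2 * int (vec.dim (X \<inter> Y)))"

definition is_linear_code :: "('a::{field,finite} ^ 'n) set set \<Rightarrow> bool" where
  "is_linear_code U \<longleftrightarrow> U \<subseteq> proj_space \<and> {0} \<in> U \<and>
     (\<exists>plus :: ('a ^ 'n) set \<Rightarrow> ('a ^ 'n) set \<Rightarrow> ('a ^ 'n) set.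
        (\<forall>X\<in>U. \<forall>Y\<in>U. plus X Y \<in> U) \<and>
        (\<forall>X\<in>U. \<forall>Y\<in>U. \<forall>Z\<in>U. plus (plus X Y) Z = plus X (plus Y Z)) \<and>
        (\<forall>X\<in>U. \<forall>Y\<in>U. plus X Y = plus Y X) \<and>
        (\<forall>X\<in>U. plus {0} X = X \<and> plus X {0} = X) \<and>
        (\<forall>X\<in>U. \<exists>Y\<in>U. plus X Y = {0}) \<and>
        (\<forall>X\<in>U. plus X X = {0}) \<and>
        (\<forall>Y1\<in>U. \<forall>Y2\<in>U. \<forall>X\<in>U. subspace_dist (plus Y1 X) (plus Y2 X) = subspace_dist Y1 Y2))"

definition is_equidistant :: "('a::{field,finite} ^ 'n) set set \<Rightarrow> bool" where
  "is_equidistant U \<longleftrightarrow> (\<exists>r. \<forall>X\<in>U. \<forall>Y\<in>U. X \<noteq> Y \<longrightarrow> subspace_dist X Y = r)"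

definition max_equidistant :: "('a::{field,finite} ^ 'n) itself \<Rightarrow> nat" where
  "max_equidistant _ = Max {card U | U :: ('a ^ 'n) set set. is_linear_code U \<and> is_equidistant U}"

end

theory Submission
  imports Defs
begin

text \<open>
  The addition of a linear code makes it an elementary abelian 2-group, so its size is a power
  of 2. In an equidistant code with at least three elements every nonzero member has the same
  dimension r, and two of them meet in dimension r/2; inside \<open>\<bbbF>\<^sub>q\<^sup>3\<close> this forces r = 2, so the
  code consists of \<open>{0}\<close> and planes. The planes are the kernels of the nonzero linear forms up to
  scaling, hence there are \<open>q\<^sup>2 + q + 1\<close> of them. Conversely, \<open>{0}\<close> together with any \<open>2\<^sup>k - 1\<close>
  planes is a code all of whose distances are 2, and every group structure with identity \<open>{0}\<close>
  (for instance one transported from the subsets of a k-set under symmetric difference) acts on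
  it by isometries. So \<open>E\<^sub>q(3)\<close> is the largest power of 2 not exceeding \<open>q\<^sup>2 + q + 2\<close>.
\<close>

section \<open>Boolean groups\<close>

locale boolean_group =
  fixes G :: "'a set" and add :: "'a \<Rightarrow> 'a \<Rightarrow> 'a" (infixl \<open>\<oplus>\<close> 65) and zero :: 'a
  assumes add_closed: "x \<in> G \<Longrightarrow> y \<in> G \<Longrightarrow> x \<oplus> y \<in> G"
    and add_assoc: "x \<in> G \<Longrightarrow> y \<in> G \<Longrightarrow> z \<in> G \<Longrightarrow> x \<oplus> y \<oplus> z = x \<oplus> (y \<oplus> z)"
    and add_commute: "x \<in> G \<Longrightarrow> y \<in> G \<Longrightarrow> x \<oplus> y = y \<oplus> x"
    and zero_closed: "zero \<in> G"
    and zero_add: "x \<in> G \<Longrightarrow> zero \<oplus> x = x"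
    and add_self: "x \<in> G \<Longrightarrow> x \<oplus> x = zero"
begin

lemma add_zero: "x \<in> G \<Longrightarrow> x \<oplus> zero = x"
  using add_commute zero_add zero_closed by metis

lemma add_left_commute: "x \<in> G \<Longrightarrow> y \<in> G \<Longrightarrow> z \<in> G \<Longrightarrow> x \<oplus> (y \<oplus> z) = y \<oplus> (x \<oplus> z)"
  by (metis add_assoc add_commute)

lemma add_add_self_left: "x \<in> G \<Longrightarrow> y \<in> G \<Longrightarrow> x \<oplus> (x \<oplus> y) = y"
  by (metis add_assoc add_self zero_add)

lemma add_right_cancel:
  "x \<in> G \<Longrightarrow> y \<in> G \<Longrightarrow> z \<in> G \<Longrightarrow> x \<oplus> z = y \<oplus> z \<longleftrightarrow> x = y"
  by (metis add_add_self_left add_commute)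

definition subgroup :: "'a set \<Rightarrow> bool" where
  "subgroup H \<longleftrightarrow> H \<subseteq> G \<and> zero \<in> H \<and> (\<forall>x\<in>H. \<forall>y\<in>H. x \<oplus> y \<in> H)"

lemma mem_subgroup_extend_iff:
  assumes "subgroup H" "a \<in> G"
  shows "x \<in> H \<union> (\<oplus>) a ` H \<longleftrightarrow> x \<in> G \<and> (x \<in> H \<or> a \<oplus> x \<in> H)"
proof -
  have HG: "H \<subseteq> G" using assms(1) by (simp add: subgroup_def)
  have "x \<in> (\<oplus>) a ` H \<longleftrightarrow> x \<in> G \<and> a \<oplus> x \<in> H"
  proof
    assume "x \<in> (\<oplus>) a ` H"
    then obtain h where "h \<in> H" "x = a \<oplus> h" by blast
    moreover from \<open>h \<in> H\<close> HG have "h \<in> G" by blast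
    ultimately show "x \<in> G \<and> a \<oplus> x \<in> H" using assms(2) by (simp add: add_closed add_add_self_left)
  next
    assume x: "x \<in> G \<and> a \<oplus> x \<in> H"
    then have "x = a \<oplus> (a \<oplus> x)" using assms(2) by (simp add: add_add_self_left)
    with x show "x \<in> (\<oplus>) a ` H" by blast
  qed
  then show ?thesis using HG by blast
qed

lemma subgroup_extend:
  assumes H: "subgroup H" and a: "a \<in> G"
  shows "subgroup (H \<union> (\<oplus>) a ` H)"
proof -
  have closed: "x \<oplus> y \<in> H" if "x \<in> H" "y \<in> H" for x y
    using H that by (simp add: subgroup_def)
  have step: "x \<oplus> y \<in> H \<or> a \<oplus> (x \<oplus> y) \<in> H"
    if x: "x \<in> G" "x \<in> H \<or> a \<oplus> x \<in> H" and y: "y \<in> G" "y \<in> H \<or> a \<oplus> y \<in> H" for x y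
  proof -
    have "a \<oplus> (x \<oplus> y) = x \<oplus> (a \<oplus> y)" "a \<oplus> (x \<oplus> y) = a \<oplus> x \<oplus> y"
      and "x \<oplus> y = a \<oplus> x \<oplus> (a \<oplus> y)"
      using x(1) y(1) a by (simp_all add: add_assoc add_left_commute[of a x] add_add_self_left add_closed)
    then show ?thesis using x(2) y(2) closed by metis
  qed
  note ext_iff = mem_subgroup_extend_iff[OF H a]
  show ?thesis
    unfolding subgroup_def
  proof (intro conjI ballI)
    fix x y assume "x \<in> H \<union> (\<oplus>) a ` H" "y \<in> H \<union> (\<oplus>) a ` H"
    then have "x \<in> G \<and> (x \<in> H \<or> a \<oplus> x \<in> H)" "y \<in> G \<and> (y \<in> H \<or> a \<oplus> y \<in> H)"
      unfolding ext_iff by blast+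
    then show "x \<oplus> y \<in> H \<union> (\<oplus>) a ` H"
      unfolding ext_iff using step add_closed by blast
  qed (use H ext_iff in \<open>auto simp: subgroup_def\<close>)
qed

lemma card_subgroup_extend:
  assumes "finite G" "subgroup H" "a \<in> G - H"
  shows "card (H \<union> (\<oplus>) a ` H) = 2 * card H"
proof -
  have HG: "H \<subseteq> G" and closed: "\<And>x y. x \<in> H \<Longrightarrow> y \<in> H \<Longrightarrow> x \<oplus> y \<in> H"
    using assms(2) by (auto simp: subgroup_def)
  have a: "a \<in> G" "a \<notin> H" using assms(3) by auto
  have "a \<oplus> h \<notin> H" if "h \<in> H" for h
  proof
    assume "a \<oplus> h \<in> H"
    from this that have "a \<oplus> h \<oplus> h \<in> H" by (rule closed)
    moreover have "a \<oplus> h \<oplus> h = a"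
      using that HG a(1) by (simp add: subsetD add_assoc add_self add_zero)
    ultimately show False using a(2) by simp
  qed
  then have "H \<inter> (\<oplus>) a ` H = {}" by blast
  moreover have "inj_on ((\<oplus>) a) H"
    using a(1) HG by (intro inj_onI) (metis add_add_self_left subsetD)
  moreover have "finite H" using assms(1) HG finite_subset by blast
  ultimately show ?thesis by (simp add: card_Un_disjoint card_image)
qed

lemma card_eq_power_of_two_mult_subgroup:
  assumes "finite G" "subgroup H"
  shows "\<exists>m. card G = 2^m * card H"
  using assms(2)
proof (induction "card G - card H" arbitrary: H rule: less_induct)
  case less
  have HG: "H \<subseteq> G" using less.prems by (simp add: subgroup_def)
  show ?case
  proof (cases "H = G")
    case True
    then show ?thesis by (metis mult_1 power_0)
  next
    case False
    with HG obtain a where a: "a \<in> G - H" by blast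
    let ?H' = "H \<union> (\<oplus>) a ` H"
    have H': "subgroup ?H'" using subgroup_extend less.prems a by blast
    have card_H': "card ?H' = 2 * card H"
      using card_subgroup_extend assms(1) less.prems a by blast
    have "finite H" using assms(1) HG finite_subset by blast
    then have "card H > 0" using less.prems by (auto simp: subgroup_def card_gt_0_iff)
    moreover have "card ?H' \<le> card G"
      using H' assms(1) by (simp add: subgroup_def card_mono)
    ultimately have "card G - card ?H' < card G - card H" using card_H' by linarith
    then obtain m where "card G = 2^m * card ?H'" using less.hyps H' by blast
    then have "card G = 2^Suc m * card H" by (simp add: card_H')
    then show ?thesis ..
  qed
qed

lemma card_eq_power_of_two:
  assumes "finite G" shows "\<exists>m. card G = 2^m"
proof -
  have "subgroup {zero}" using zero_closed zero_add by (simp add: subgroup_def)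
  then show ?thesis using card_eq_power_of_two_mult_subgroup[OF assms] by fastforce
qed

lemma transfer_bij:
  assumes "bij_betw f G G'"
  shows "boolean_group G' (\<lambda>x y. f (inv_into G f x \<oplus> inv_into G f y)) (f zero)"
proof -
  have inv: "inv_into G f x \<in> G" if "x \<in> G'" for x
    using assms that by (metis bij_betw_imp_surj_on inv_into_into)
  have f: "f x \<in> G'" if "x \<in> G" for x using assms that by (metis bij_betwE)
  have inv_f: "inv_into G f (f x) = x" if "x \<in> G" for x
    using assms that by (simp add: bij_betw_inv_into_left)
  have f_inv: "f (inv_into G f x) = x" if "x \<in> G'" for x
    using assms that by (simp add: bij_betw_inv_into_right)
  show ?thesis
  proof unfold_locales
    fix x y z assume "x \<in> G'" "y \<in> G'" "z \<in> G'"
    then show "f (inv_into G f (f (inv_into G f x \<oplus> inv_into G f y)) \<oplus> inv_into G f z) =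
      f (inv_into G f x \<oplus> inv_into G f (f (inv_into G f y \<oplus> inv_into G f z)))"
      by (simp add: inv inv_f add_closed add_assoc)
  next
    fix x y assume "x \<in> G'" "y \<in> G'"
    then show "f (inv_into G f x \<oplus> inv_into G f y) \<in> G'"
      and "f (inv_into G f x \<oplus> inv_into G f y) = f (inv_into G f y \<oplus> inv_into G f x)"
      by (simp_all add: inv f add_closed add_commute)
  qed (simp_all add: inv inv_f f_inv f zero_closed zero_add add_self)
qed

end

lemma boolean_group_Pow: "boolean_group (Pow A) sym_diff {}"
  by unfold_locales auto

lemma ex_boolean_group_if_card_power_of_two:
  assumes "finite U" "card U = 2^n" "e \<in> U"
  shows "\<exists>add. boolean_group U add e"
proof -
  let ?P = "Pow {..<n}"
  obtain h where h: "bij_betw h ?P U"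
    using finite_same_card_bij[of ?P U] assms by (auto simp: card_Pow)
  define c where "c = inv_into ?P h e"
  have c: "c \<in> ?P" "h c = e"
    using h assms(3) by (auto simp: c_def bij_betw_def inv_into_into f_inv_into_f)
  have "bij_betw (\<lambda>X. sym_diff X c) ?P ?P"
    by (rule bij_betw_byWitness[where f' = "\<lambda>X. sym_diff X c"]) (use c in auto)
  then have "bij_betw (h \<circ> (\<lambda>X. sym_diff X c)) ?P U"
    using h by (rule bij_betw_trans)
  then show ?thesis
    using boolean_group.transfer_bij[OF boolean_group_Pow] c(2) by fastforce
qed

section \<open>Hyperplanes\<close>

definition dot_prod :: "'a::comm_ring ^ 'n \<Rightarrow> 'a ^ 'n \<Rightarrow> 'a" where
  "dot_prod a x = (\<Sum>i\<in>UNIV. a$i * x$i)"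

lemma dot_prod_add_right: "dot_prod a (x + y) = dot_prod a x + dot_prod a y"
  by (simp add: dot_prod_def distrib_left sum.distrib)

lemma dot_prod_diff_right: "dot_prod a (x - y) = dot_prod a x - dot_prod a y"
  by (simp add: dot_prod_def right_diff_distrib sum_subtractf)

lemma dot_prod_scale_right: "dot_prod a (c *s x) = c * dot_prod a x"
  by (simp add: dot_prod_def sum_distrib_left algebra_simps)

lemma dot_prod_scale_left: "dot_prod (c *s a) x = c * dot_prod a x"
  by (simp add: dot_prod_def sum_distrib_left algebra_simps)

lemma dot_prod_zero_right [simp]: "dot_prod a 0 = 0"
  by (simp add: dot_prod_def)

lemma dot_prod_axis_right: "dot_prod a (axis i c) = a$i * c"
  by (simp add: dot_prod_def axis_def if_distrib[of "\<lambda>t. _ * t"] sum.delta cong: if_cong)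

definition hyperplane :: "'a::field ^ 'n \<Rightarrow> ('a ^ 'n) set" where
  "hyperplane a = {x. dot_prod a x = 0}"

definition grassmannian :: "nat \<Rightarrow> ('a::field ^ 'n) set set" where
  "grassmannian k = {X. vec.subspace X \<and> vec.dim X = k}"

lemma subspace_hyperplane: "vec.subspace (hyperplane a)"
  unfolding vec.subspace_def hyperplane_def by (auto simp: dot_prod_add_right dot_prod_scale_right)

lemma hyperplane_scale: "c \<noteq> 0 \<Longrightarrow> hyperplane (c *s a) = hyperplane a"
  by (simp add: hyperplane_def dot_prod_scale_left)

lemma nonzero_vec_component:
  fixes a :: "'a::zero ^ 'n"
  assumes "a \<noteq> 0" obtains i where "a$i \<noteq> 0"
  using assms by (metis vec_eq_iff zero_index)

lemma hyperplane_subset_imp_multiple: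
  fixes a b :: "'a::field ^ 'n"
  assumes "a \<noteq> 0" "hyperplane a \<subseteq> hyperplane b"
  shows "\<exists>c. b = c *s a"
proof -
  obtain i where i: "a$i \<noteq> 0" using assms(1) by (rule nonzero_vec_component)
  have "b$j * a$i = b$i * a$j" for j
  proof -
    have "axis j (a$i) - axis i (a$j) \<in> hyperplane a"
      by (simp add: hyperplane_def dot_prod_diff_right dot_prod_axis_right mult.commute)
    with assms(2) have "axis j (a$i) - axis i (a$j) \<in> hyperplane b" ..
    then show ?thesis
      by (simp add: hyperplane_def dot_prod_diff_right dot_prod_axis_right)
  qed
  then have "b = (b$i / a$i) *s a"
    using i by (simp add: vec_eq_iff field_simps)
  then show ?thesis ..
qed

lemma dim_hyperplane:
  fixes a :: "'a::field ^ 'n"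
  assumes "a \<noteq> 0"
  shows "vec.dim (hyperplane a) = CARD('n) - 1"
proof -
  obtain i where i: "a$i \<noteq> 0" using assms by (rule nonzero_vec_component)
  define e :: "'a ^ 'n" where "e = axis i 1"
  let ?H = "hyperplane a" and ?E = "vec.span {e}"
  have dot_e: "dot_prod a (c *s e) = c * a$i" for c
    by (simp add: e_def dot_prod_scale_right dot_prod_axis_right)
  have "z \<in> {x + y |x y. x \<in> ?H \<and> y \<in> ?E}" for z
  proof -
    define c where "c = dot_prod a z / a$i"
    have "z - c *s e \<in> ?H"
      using i by (simp add: hyperplane_def dot_prod_diff_right dot_e c_def)
    moreover have "c *s e \<in> ?E" by (simp add: vec.span_base vec.span_scale)
    moreover have "z = (z - c *s e) + c *s e" by simp
    ultimately show ?thesis by blast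
  qed
  then have sum: "{x + y |x y. x \<in> ?H \<and> y \<in> ?E} = UNIV" by blast
  have "?H \<inter> ?E \<subseteq> {0}"
    using i by (auto simp: vec.span_singleton hyperplane_def dot_e)
  then have int: "?H \<inter> ?E = {0}"
    using subspace_hyperplane vec.subspace_0 vec.span_zero by blast
  have "vec.independent {e}"
    by (simp add: e_def axis_eq_0_iff vec.independent_insert vec.span_empty)
  then have dim_E: "vec.dim ?E = 1" by (simp add: vec.dim_span_eq_card_independent)
  have "vec.dim {x + y |x y. x \<in> ?H \<and> y \<in> ?E} + vec.dim (?H \<inter> ?E) = vec.dim ?H + vec.dim ?E"
    by (rule vec.dim_sums_Int[OF subspace_hyperplane vec.subspace_span])
  then have "vec.dim (UNIV :: ('a ^ 'n) set) + vec.dim {0 :: 'a ^ 'n} = vec.dim ?H + 1"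
    by (simp only: sum int dim_E)
  then show ?thesis unfolding vec_dim_card by simp
qed

lemma hyperplane_eq_iff:
  fixes a b :: "'a::field ^ 'n"
  assumes "a \<noteq> 0"
  shows "b \<noteq> 0 \<and> hyperplane b = hyperplane a \<longleftrightarrow> (\<exists>c. c \<noteq> 0 \<and> b = c *s a)"
  using assms hyperplane_subset_imp_multiple[OF assms, of b] hyperplane_scale by fastforce

lemma card_hyperplanes:
  "card (hyperplane ` (UNIV - {0 :: 'a::{field,finite} ^ 'n})) * (CARD('a) - 1) = CARD('a) ^ CARD('n) - 1"
proof -
  let ?N = "UNIV - {0 :: 'a ^ 'n}"
  have fibre: "card {b \<in> ?N. hyperplane b = H} = CARD('a) - 1" if H: "H \<in> hyperplane ` ?N" for H
  proof -
    obtain a where a: "a \<noteq> 0" "H = hyperplane a" using H by blast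
    then have "{b \<in> ?N. hyperplane b = H} = (\<lambda>c. c *s a) ` (UNIV - {0})"
      using hyperplane_eq_iff[OF a(1)] by auto
    moreover have "inj_on (\<lambda>c. c *s a) (UNIV - {0})"
      using a(1) by (auto simp: inj_on_def)
    ultimately show ?thesis by (simp add: card_image card_Diff_singleton)
  qed
  have "card ?N = (\<Sum>H\<in>hyperplane ` ?N. card {b \<in> ?N. hyperplane b = H})"
    using sum.image_gen[of ?N "\<lambda>_. 1 :: nat" hyperplane] by simp
  also have "\<dots> = (\<Sum>H\<in>hyperplane ` ?N. CARD('a) - 1)"
    by (intro sum.cong refl fibre)
  also have "\<dots> = card (hyperplane ` ?N) * (CARD('a) - 1)"
    by simp
  finally show ?thesis by (simp add: card_Diff_singleton)
qed

lemma dim_Int_distinct_hyperplanes: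
  fixes X Y :: "('a::field ^ 'n) set"
  assumes "X \<in> grassmannian (CARD('n) - 1)" "Y \<in> grassmannian (CARD('n) - 1)" "X \<noteq> Y"
  shows "vec.dim (X \<inter> Y) = CARD('n) - 2"
proof -
  have X: "vec.subspace X" "vec.dim X = CARD('n) - 1"
    and Y: "vec.subspace Y" "vec.dim Y = CARD('n) - 1"
    using assms by (auto simp: grassmannian_def)
  have "vec.dim (X \<inter> Y) \<noteq> CARD('n) - 1"
  proof
    assume "vec.dim (X \<inter> Y) = CARD('n) - 1"
    then have "X \<inter> Y = X" "X \<inter> Y = Y"
      using vec.subspace_dim_equal[OF vec.subspace_inter[OF X(1) Y(1)]] X Y by simp_all
    then show False using assms(3) by simp
  qed
  moreover have "vec.dim (X \<inter> Y) \<le> CARD('n) - 1"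
    using vec.dim_subset[of "X \<inter> Y" X] X by simp
  moreover have "vec.dim {x + y |x y. x \<in> X \<and> y \<in> Y} + vec.dim (X \<inter> Y) = vec.dim X + vec.dim Y"
    by (rule vec.dim_sums_Int[OF X(1) Y(1)])
  moreover have "vec.dim {x + y |x y. x \<in> X \<and> y \<in> Y} \<le> CARD('n)"
    by (rule dim_subset_UNIV_cart_gen)
  ultimately show ?thesis using X Y by linarith
qed

section \<open>Planes in \<open>\<bbbF>\<^sup>3\<close>\<close>

abbreviation planes :: "('a::field ^ 3) set set" where
  "planes \<equiv> grassmannian 2"

definition cross_prod :: "'a::comm_ring ^ 3 \<Rightarrow> 'a ^ 3 \<Rightarrow> 'a ^ 3" where
  "cross_prod u v = vector [u$2 * v$3 - u$3 * v$2, u$3 * v$1 - u$1 * v$3, u$1 * v$2 - u$2 * v$1]"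

lemma dot_prod_cross_prod: "dot_prod (cross_prod u v) u = 0" "dot_prod (cross_prod u v) v = 0"
  by (simp_all add: dot_prod_def sum_3 cross_prod_def algebra_simps)

lemma cross_prod_eq_0_imp_multiple:
  fixes u v :: "'a::field ^ 3"
  assumes "u \<noteq> 0" "cross_prod u v = 0"
  shows "\<exists>c. v = c *s u"
proof -
  obtain k where k: "u$k \<noteq> 0" using assms(1) by (rule nonzero_vec_component)
  have "u$2 * v$3 = u$3 * v$2" "u$3 * v$1 = u$1 * v$3" "u$1 * v$2 = u$2 * v$1"
    using assms(2) by (simp_all add: cross_prod_def vec_eq_iff forall_3)
  then have "v$j * u$k = v$k * u$j" for j
    using exhaust_3[of k] exhaust_3[of j] by (elim disjE) (simp_all add: mult.commute)
  then have "v$j = (v$k / u$k) * u$j" for j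
    using k by (simp add: field_simps)
  then have "v = (v$k / u$k) *s u"
    unfolding vec_eq_iff vector_smult_component by blast
  then show ?thesis ..
qed

lemma planes_eq_hyperplanes:
  "(planes :: ('a::field ^ 3) set set) = hyperplane ` (UNIV - {0})"
proof (intro equalityI subsetI)
  fix P :: "('a ^ 3) set"
  assume "P \<in> planes"
  then have P: "vec.subspace P" "vec.dim P = 2" by (auto simp: grassmannian_def)
  obtain B where B: "B \<subseteq> P" "vec.independent B" "P \<subseteq> vec.span B" "card B = 2"
    using vec.basis_exists[of P] P(2) by metis
  then obtain u v where uv: "B = {u, v}" "u \<noteq> v" by (auto simp: card_2_iff)
  then have "vec.independent (insert v {u})" using B(2) by (simp add: insert_commute)
  then have "u \<noteq> 0" "v \<notin> vec.span {u}"
    using uv(2) by (auto simp: vec.independent_insert vec.dependent_zero)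
  then have a: "cross_prod u v \<noteq> 0"
    using cross_prod_eq_0_imp_multiple by (fastforce simp: vec.span_singleton)
  have "{u, v} \<subseteq> hyperplane (cross_prod u v)"
    by (simp add: hyperplane_def dot_prod_cross_prod)
  then have "P \<subseteq> hyperplane (cross_prod u v)"
    using B(3) uv(1) vec.span_minimal subspace_hyperplane by blast
  moreover have "vec.dim (hyperplane (cross_prod u v)) = vec.dim P"
    using dim_hyperplane[OF a] P(2) by simp
  ultimately have "P = hyperplane (cross_prod u v)"
    using vec.subspace_dim_equal[OF P(1) subspace_hyperplane] by simp
  then show "P \<in> hyperplane ` (UNIV - {0})" using a by blast
next
  fix P :: "('a ^ 3) set"
  assume "P \<in> hyperplane ` (UNIV - {0})"
  then show "P \<in> planes"
    using subspace_hyperplane dim_hyperplane by (fastforce simp: grassmannian_def)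
qed

lemma card_planes:
  "card (planes :: ('a::{field,finite} ^ 3) set set) = CARD('a)^2 + CARD('a) + 1"
proof -
  define p where "p = CARD('a) - 1"
  have "card {0 :: 'a, 1} \<le> CARD('a)" by (rule card_mono) auto
  then have q: "CARD('a) = p + 1" "p \<noteq> 0" by (auto simp: p_def)
  have "card (planes :: ('a ^ 3) set set) * p = (p + 1)^3 - 1"
    using card_hyperplanes[where 'a='a and 'n=3] by (simp add: planes_eq_hyperplanes q)
  also have "\<dots> = (CARD('a)^2 + CARD('a) + 1) * p"
    unfolding q(1) by (simp add: power3_eq_cube power2_eq_square algebra_simps)
  finally show ?thesis using q(2) by (metis mult_right_cancel)
qed

section \<open>Equidistant linear codes\<close>

lemma subspace_dist_self [simp]: "subspace_dist X X = 0"
  by (simp add: subspace_dist_def)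

lemma subspace_dist_commute: "subspace_dist X Y = subspace_dist Y X"
  by (simp add: subspace_dist_def Int_commute)

lemma subspace_dist_zero_left:
  assumes "vec.subspace X" shows "subspace_dist {0} X = vec.dim X"
proof -
  have "{0} \<inter> X = {0}" using vec.subspace_0[OF assms] by blast
  then show ?thesis by (simp add: subspace_dist_def)
qed

lemma subspace_dist_zero_or_plane_eq_2:
  fixes A B :: "('a::{field,finite} ^ 3) set"
  assumes "A \<in> insert {0} planes" "B \<in> insert {0} planes" "A \<noteq> B"
  shows "subspace_dist A B = 2"
proof -
  have to_plane: "subspace_dist {0} P = 2" if "P \<in> planes" for P :: "('a ^ 3) set"
    using that by (simp add: grassmannian_def subspace_dist_zero_left)
  from assms consider "A = {0}" "B \<in> planes" | "A \<in> planes" "B = {0}"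
    | "A \<in> planes" "B \<in> planes"
    by auto
  then show ?thesis
  proof cases
    case 3
    then show ?thesis
      using dim_Int_distinct_hyperplanes[where 'n = 3, of A B] assms(3)
      by (simp add: grassmannian_def subspace_dist_def)
  qed (simp_all add: to_plane subspace_dist_commute[of A])
qed

lemma linear_code_boolean_group:
  assumes "is_linear_code U"
  shows "\<exists>add. boolean_group U add {0}"
proof -
  obtain add where "{0} \<in> U" "\<forall>X\<in>U. \<forall>Y\<in>U. add X Y \<in> U"
    "\<forall>X\<in>U. \<forall>Y\<in>U. \<forall>Z\<in>U. add (add X Y) Z = add X (add Y Z)"
    "\<forall>X\<in>U. \<forall>Y\<in>U. add X Y = add Y X" "\<forall>X\<in>U. add {0} X = X \<and> add X {0} = X"
    "\<forall>X\<in>U. add X X = {0}"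
    using assms unfolding is_linear_code_def by auto
  then have "boolean_group U add {0}" by unfold_locales auto
  then show ?thesis by blast
qed

lemma card_linear_code_power_of_two:
  fixes U :: "('a::{field,finite} ^ 'n) set set"
  assumes "is_linear_code U"
  shows "\<exists>m. card U = 2^m"
  using linear_code_boolean_group[OF assms] boolean_group.card_eq_power_of_two[of U] by auto

lemma linear_code_if_constant_distance:
  assumes "U \<subseteq> proj_space" "boolean_group U add {0}"
    and dist: "\<And>X Y. X \<in> U \<Longrightarrow> Y \<in> U \<Longrightarrow> X \<noteq> Y \<Longrightarrow> subspace_dist X Y = r"
  shows "is_linear_code U"
proof -
  interpret boolean_group U add "{0}" by fact
  have isometry: "subspace_dist (add Y1 X) (add Y2 X) = subspace_dist Y1 Y2"
    if "Y1 \<in> U" "Y2 \<in> U" "X \<in> U" for Y1 Y2 X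
    using that dist add_closed add_right_cancel by (cases "Y1 = Y2") auto
  have inverse: "\<exists>Y\<in>U. add X Y = {0}" if "X \<in> U" for X
    using that add_self by blast
  show ?thesis
    unfolding is_linear_code_def
  proof (intro conjI exI[of _ add] ballI)
    fix X Y assume "X \<in> U" "Y \<in> U"
    then show "add X Y = add Y X" by (rule add_commute)
  qed (use assms(1) in \<open>simp_all add: isometry inverse zero_closed add_closed add_assoc zero_add add_zero add_self\<close>)
qed

lemma equidistant_code_subset_planes:
  fixes U :: "('a::{field,finite} ^ 3) set set"
  assumes "U \<subseteq> proj_space" "{0} \<in> U" "is_equidistant U" "2 < card U"
  shows "U \<subseteq> insert {0} planes"
proof
  fix X assume X: "X \<in> U"
  show "X \<in> insert {0} planes"
  proof (cases "X = {0}")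
    case False
    obtain r where r: "\<And>X Y. X \<in> U \<Longrightarrow> Y \<in> U \<Longrightarrow> X \<noteq> Y \<Longrightarrow> subspace_dist X Y = r"
      using assms(3) unfolding is_equidistant_def by auto
    have sub: "vec.subspace Z" if "Z \<in> U" for Z
      using assms(1) that by (auto simp: proj_space_def)
    have "\<not> U \<subseteq> {X, {0}}"
    proof
      assume "U \<subseteq> {X, {0}}"
      then have "card U \<le> card {X, {0}}" by (rule card_mono[rotated]) simp
      also have "\<dots> \<le> 2" by (rule card_insert_le_m1) simp_all
      finally show False using assms(4) by simp
    qed
    then obtain Y where Y: "Y \<in> U" "Y \<noteq> X" "Y \<noteq> {0}" by blast
    have dim_X: "vec.dim X = r"
      using r[OF assms(2) X] False sub[OF X] by (simp add: subspace_dist_zero_left)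
    have dim_Y: "vec.dim Y = r"
      using r[OF assms(2) Y(1)] Y(3) sub[OF Y(1)] by (simp add: subspace_dist_zero_left)
    define k where "k = vec.dim (X \<inter> Y)"
    have "k \<le> r" using vec.dim_subset[of "X \<inter> Y" X] dim_X by (auto simp: k_def)
    moreover have "nat (int r + int r - 2 * int k) = r"
      using r[OF X Y(1)] Y(2) dim_X dim_Y by (simp add: subspace_dist_def k_def)
    ultimately have "r = 2 * k" by linarith
    moreover have "vec.dim X \<noteq> 0"
      using False vec.subspace_0[OF sub[OF X]] by (auto simp: subset_singleton_iff)
    moreover have "vec.dim X \<le> 3"
      using dim_subset_UNIV_cart_gen[of X] by simp
    ultimately have "vec.dim X = 2" using dim_X by presburger
    then show ?thesis using sub[OF X] by (simp add: grassmannian_def)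
  qed simp
qed

lemma card_equidistant_linear_code_le:
  fixes U :: "('a::{field,finite} ^ 3) set set"
  assumes "is_linear_code U" "is_equidistant U"
  shows "card U \<le> CARD('a)^2 + CARD('a) + 2"
proof (cases "card U \<le> 2")
  case False
  then have "U \<subseteq> insert {0} planes"
    using assms by (intro equidistant_code_subset_planes) (auto simp: is_linear_code_def)
  then have "card U \<le> card (insert {0} (planes :: ('a ^ 3) set set))"
    by (simp add: card_mono)
  also have "\<dots> \<le> CARD('a)^2 + CARD('a) + 2"
    by (simp add: card_insert_if card_planes)
  finally show ?thesis .
qed simp

lemma equidistant_linear_code_of_planes:
  fixes L :: "('a::{field,finite} ^ 3) set set"
  assumes "L \<subseteq> planes" "card L = 2^n - 1"
  shows "is_linear_code (insert {0} L)" "is_equidistant (insert {0} L)" "card (insert {0} L) = 2^n"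
proof -
  have "{0} \<notin> L" using assms(1) by (auto simp: grassmannian_def)
  then show card: "card (insert {0} L) = 2^n" using assms(2) by simp
  have dist: "subspace_dist X Y = 2" if "X \<in> insert {0} L" "Y \<in> insert {0} L" "X \<noteq> Y" for X Y
    using assms(1) that subspace_dist_zero_or_plane_eq_2 by blast
  then show "is_equidistant (insert {0} L)" unfolding is_equidistant_def by auto
  obtain add where add: "boolean_group (insert {0} L) add {0}"
    using ex_boolean_group_if_card_power_of_two[of "insert {0} L" n "{0}"] card by auto
  have "insert {0} L \<subseteq> proj_space"
    using assms(1) by (auto simp: proj_space_def grassmannian_def)
  from linear_code_if_constant_distance[OF this add dist]
  show "is_linear_code (insert {0} L)" .
qed

lemma power_two_le_iff_le_floor_log:
  fixes N :: nat
  assumes "0 < N"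
  shows "2^m \<le> N \<longleftrightarrow> m \<le> nat \<lfloor>log 2 (real N)\<rfloor>"
proof -
  obtain n where n: "2^n \<le> N" "N < 2^(n+1)"
    using ex_power_ivl1[of 2 N] assms by auto
  then have log: "nat \<lfloor>log 2 (real N)\<rfloor> = n"
    using floor_log_nat_eq_if[OF n] by simp
  show ?thesis
  proof
    assume "2^m \<le> N"
    with n(2) have "(2::nat)^m < 2^(n+1)" by linarith
    then show "m \<le> nat \<lfloor>log 2 (real N)\<rfloor>"
      using power_strict_increasing_iff[of "2::nat" m "n + 1"] log by simp
  next
    assume "m \<le> nat \<lfloor>log 2 (real N)\<rfloor>"
    then have "(2::nat)^m \<le> 2^n" using log by (simp add: power_increasing)
    with n(1) show "2^m \<le> N" by linarith
  qed
qed

theorem proposition3: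
  shows "max_equidistant TYPE('a::{field,finite} ^ 3) =
           2 ^ nat \<lfloor>log 2 (real (CARD('a) ^ 2 + CARD('a) + 2))\<rfloor>"
proof -
  define N where "N = CARD('a) ^ 2 + CARD('a) + 2"
  define k where "k = nat \<lfloor>log 2 (real N)\<rfloor>"
  have pow_le_N: "2^m \<le> N \<longleftrightarrow> m \<le> k" for m
    unfolding k_def by (rule power_two_le_iff_le_floor_log) (simp add: N_def)
  let ?S = "{card U | U :: ('a ^ 3) set set. is_linear_code U \<and> is_equidistant U}"
  have upper: "card U \<le> 2^k" if U: "is_linear_code U" "is_equidistant U" for U :: "('a ^ 3) set set"
  proof -
    obtain m where m: "card U = 2^m" using card_linear_code_power_of_two[OF U(1)] by blast
    then have "m \<le> k" using card_equidistant_linear_code_le[OF U] pow_le_N by (simp add: N_def)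
    then show ?thesis using m by (simp add: power_increasing)
  qed
  have "2^k - 1 \<le> card (planes :: ('a ^ 3) set set)"
    using pow_le_N[of k] card_planes[where 'a = 'a] by (simp add: N_def)
  then obtain L :: "('a ^ 3) set set" where L: "L \<subseteq> planes" "card L = 2^k - 1"
    by (metis obtain_subset_with_card_n)
  then have "2^k \<in> ?S"
    using equidistant_linear_code_of_planes[OF L] by (intro CollectI exI[of _ "insert {0} L"]) simp
  moreover have "finite ?S"
    by (rule finite_subset[of _ "card ` UNIV"]) auto
  ultimately have "Max ?S = 2^k" by (intro Max_eqI) (use upper in auto)
  then show ?thesis by (simp add: max_equidistant_def N_def k_def)
qed

end
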